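(* Let $S$ be a monoid, $A$ an $S$-act and $\Sigma=\Sigma(X)$ a consistent set of equations over $A$; identify $A$ with its image in $A(\Sigma)$ under $\nu_\Sigma$. The following are equivalent: (1) $\Sigma$ has a solution in $A$; (2) $A$ is a retract of $A(\Sigma)$; (3) the $S$-morphism $\theta:D(\Sigma)\to A$, $([xs]v)\theta=av$ for $xs=a\in\Sigma$, $v\in S$, extends to an $S$-morphism $C(\Sigma)\to A$.
   Context: A (right) $S$-act is a set $A$ with a map $A\times S\to A$ such that $a1=a$, $a(st)=(as)t$. $F_S(X)$ is the free $S$-act on $X$. An equation over $A$ with variables from $X$ has one of the forms $xs=yt$, $xs=xt$, $xs=a$ ($x,y\in X$, $s,t\in S$, $a\in A$); a solution in $B\supseteq A$ is a family $(b_x)$ in $B$ satisfying all equations; $\Sigma$ is consistent if it has a solution in some $S$-act containing $A$. $H(\Sigma)=\{(xu,yv):xu=yv\in\Sigma\}$, $K(\Sigma)=\{(xs,a):xs=a\in\Sigma\}$; $\rho_\Sigma$ is the congruence on $F_S(X)$ generated by $H(\Sigma)$, $\kappa_\Sigma$ that on $A\sqcup F_S(X)$ generated by $H(\Sigma)\cup K(\Sigma)$; $A(\Sigma)=(A\sqcup F_S(X))/\kappa_\Sigma$, $C(\Sigma)=F_S(X)/\rho_\Sigma$, $D(\Sigma)=\bigcup_{xs=a\in\Sigma}[xs]S\subseteq C(\Sigma)$, $\nu_\Sigma:A\to A(\Sigma)$, $a\mapsto[a]$, which is injective when $\Sigma$ is consistent, and $\theta$ is then a well-defined $S$-morphism.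 $A$ is a retract of $A(\Sigma)$ if there is an $S$-morphism $A(\Sigma)\to A$ which is the identity on $A$. *)

theory Defs
  imports Main
begin

definition is_act :: "'c set \<Rightarrow> ('c \<Rightarrow> 's::monoid_mult \<Rightarrow> 'c) \<Rightarrow> bool" where
  "is_act A f \<longleftrightarrow> (\<forall>a\<in>A. \<forall>s. f a s \<in> A) \<and> (\<forall>a\<in>A. f a 1 = a)
      \<and> (\<forall>a\<in>A. \<forall>s t. f a (s * t) = f (f a s) t)"

text \<open>S-morphisms between S-acts (only their values on the carrier matter).\<close>
definition is_morph :: "'c set \<Rightarrow> ('c \<Rightarrow> 's \<Rightarrow> 'c) \<Rightarrow> 'd set \<Rightarrow> ('d \<Rightarrow> 's \<Rightarrow> 'd)
    \<Rightarrow> ('c \<Rightarrow> 'd) \<Rightarrow> bool" where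
  "is_morph A f B g h \<longleftrightarrow> (\<forall>a\<in>A. h a \<in> B) \<and> (\<forall>a\<in>A. \<forall>s. h (f a s) = g (h a) s)"

text \<open>EqV x s y t stands for xs = yt (x = y allowed, giving xs = xt); EqC x s a for xs = a.\<close>
datatype ('x, 's, 'a) eqn = EqV 'x 's 'x 's | EqC 'x 's 'a

definition eqns_over :: "'a set \<Rightarrow> 'x set \<Rightarrow> ('x, 's, 'a) eqn set \<Rightarrow> bool" where
  "eqns_over A X \<Sigma> \<longleftrightarrow> (\<forall>e\<in>\<Sigma>. case e of EqV x s y t \<Rightarrow> x \<in> X \<and> y \<in> X
                                     | EqC x s a \<Rightarrow> x \<in> X \<and> a \<in> A)"

text \<open>A solution in an act B into which A is embedded by e (e identifies A with a subact of B).\<close>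
definition is_solution :: "'b set \<Rightarrow> ('b \<Rightarrow> 's \<Rightarrow> 'b) \<Rightarrow> ('a \<Rightarrow> 'b) \<Rightarrow> 'x set
    \<Rightarrow> ('x, 's, 'a) eqn set \<Rightarrow> ('x \<Rightarrow> 'b) \<Rightarrow> bool" where
  "is_solution B g e X \<Sigma> b \<longleftrightarrow> (\<forall>x\<in>X. b x \<in> B)
     \<and> (\<forall>x s y t. EqV x s y t \<in> \<Sigma> \<longrightarrow> g (b x) s = g (b y) t)
     \<and> (\<forall>x s a. EqC x s a \<in> \<Sigma> \<longrightarrow> g (b x) s = e a)"

definition free_act :: "'x set \<Rightarrow> ('x \<times> 's) set" where
  "free_act X = X \<times> UNIV"

definition free_action :: "('x \<times> 's::monoid_mult) \<Rightarrow> 's \<Rightarrow> ('x \<times> 's)" where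
  "free_action p t = (fst p, snd p * t)"

definition sum_carrier :: "'a set \<Rightarrow> 'x set \<Rightarrow> ('a + ('x \<times> 's)) set" where
  "sum_carrier A X = Inl ` A \<union> Inr ` free_act X"

fun sum_action :: "('a \<Rightarrow> 's::monoid_mult \<Rightarrow> 'a) \<Rightarrow> ('a + ('x \<times> 's)) \<Rightarrow> 's \<Rightarrow> ('a + ('x \<times> 's))" where
  "sum_action f (Inl a) s = Inl (f a s)"
| "sum_action f (Inr p) s = Inr (free_action p s)"

inductive_set cong_gen :: "'c set \<Rightarrow> ('c \<Rightarrow> 's \<Rightarrow> 'c) \<Rightarrow> ('c \<times> 'c) set \<Rightarrow> ('c \<times> 'c) set"
  for C f R where
  base: "(p, q) \<in> R \<Longrightarrow> p \<in> C \<Longrightarrow> q \<in> C \<Longrightarrow> (p, q) \<in> cong_gen C f R"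
| refl: "p \<in> C \<Longrightarrow> (p, p) \<in> cong_gen C f R"
| sym: "(p, q) \<in> cong_gen C f R \<Longrightarrow> (q, p) \<in> cong_gen C f R"
| trans: "(p, q) \<in> cong_gen C f R \<Longrightarrow> (q, r) \<in> cong_gen C f R \<Longrightarrow> (p, r) \<in> cong_gen C f R"
| compat: "(p, q) \<in> cong_gen C f R \<Longrightarrow> (f p s, f q s) \<in> cong_gen C f R"

definition quot_action :: "('c \<times> 'c) set \<Rightarrow> ('c \<Rightarrow> 's \<Rightarrow> 'c) \<Rightarrow> 'c set \<Rightarrow> 's \<Rightarrow> 'c set" where
  "quot_action \<rho> f Q s = \<rho> `` {f (SOME p. p \<in> Q) s}"

definition H_rel :: "('x, 's, 'a) eqn set \<Rightarrow> (('x \<times> 's) \<times> ('x \<times> 's)) set" where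
  "H_rel \<Sigma> = {((x, u), (y, v)) | x u y v. EqV x u y v \<in> \<Sigma>}"

definition K_rel :: "('x, 's, 'a) eqn set \<Rightarrow> (('a + ('x \<times> 's)) \<times> ('a + ('x \<times> 's))) set" where
  "K_rel \<Sigma> = {(Inr (x, s), Inl a) | x s a. EqC x s a \<in> \<Sigma>}"

definition rho :: "'x set \<Rightarrow> ('x, 's::monoid_mult, 'a) eqn set \<Rightarrow> (('x \<times> 's) \<times> ('x \<times> 's)) set" where
  "rho X \<Sigma> = cong_gen (free_act X) free_action (H_rel \<Sigma>)"

definition kappa :: "'a set \<Rightarrow> ('a \<Rightarrow> 's::monoid_mult \<Rightarrow> 'a) \<Rightarrow> 'x set \<Rightarrow> ('x, 's, 'a) eqn set
    \<Rightarrow> (('a + ('x \<times> 's)) \<times> ('a + ('x \<times> 's))) set" where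
  "kappa A f X \<Sigma> = cong_gen (sum_carrier A X) (sum_action f)
      ((\<lambda>(p, q). (Inr p, Inr q)) ` H_rel \<Sigma> \<union> K_rel \<Sigma>)"

definition A_Sig :: "'a set \<Rightarrow> ('a \<Rightarrow> 's::monoid_mult \<Rightarrow> 'a) \<Rightarrow> 'x set \<Rightarrow> ('x, 's, 'a) eqn set
    \<Rightarrow> ('a + ('x \<times> 's)) set set" where
  "A_Sig A f X \<Sigma> = sum_carrier A X // kappa A f X \<Sigma>"

definition A_Sig_action :: "'a set \<Rightarrow> ('a \<Rightarrow> 's::monoid_mult \<Rightarrow> 'a) \<Rightarrow> 'x set \<Rightarrow> ('x, 's, 'a) eqn set
    \<Rightarrow> ('a + ('x \<times> 's)) set \<Rightarrow> 's \<Rightarrow> ('a + ('x \<times> 's)) set" where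
  "A_Sig_action A f X \<Sigma> = quot_action (kappa A f X \<Sigma>) (sum_action f)"

definition nu :: "'a set \<Rightarrow> ('a \<Rightarrow> 's::monoid_mult \<Rightarrow> 'a) \<Rightarrow> 'x set \<Rightarrow> ('x, 's, 'a) eqn set
    \<Rightarrow> 'a \<Rightarrow> ('a + ('x \<times> 's)) set" where
  "nu A f X \<Sigma> a = kappa A f X \<Sigma> `` {Inl a}"

definition C_Sig :: "'x set \<Rightarrow> ('x, 's::monoid_mult, 'a) eqn set \<Rightarrow> ('x \<times> 's) set set" where
  "C_Sig X \<Sigma> = free_act X // rho X \<Sigma>"

definition C_Sig_action :: "'x set \<Rightarrow> ('x, 's::monoid_mult, 'a) eqn set \<Rightarrow> ('x \<times> 's) set \<Rightarrow> 's \<Rightarrow> ('x \<times> 's) set" where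
  "C_Sig_action X \<Sigma> = quot_action (rho X \<Sigma>) free_action"

text \<open>D(\<Sigma>) = union of the cyclic subacts [xs]S for xs = a in \<Sigma>; note [xs]v = [x(sv)].\<close>
definition D_Sig :: "'x set \<Rightarrow> ('x, 's::monoid_mult, 'a) eqn set \<Rightarrow> ('x \<times> 's) set set" where
  "D_Sig X \<Sigma> = {rho X \<Sigma> `` {(x, s * v)} | x s a v. EqC x s a \<in> \<Sigma>}"

text \<open>theta : D(\<Sigma>) \<rightarrow> A, ([xs]v)theta = av for xs = a in \<Sigma> (well defined for consistent \<Sigma>).\<close>
definition theta :: "('a \<Rightarrow> 's::monoid_mult \<Rightarrow> 'a) \<Rightarrow> 'x set \<Rightarrow> ('x, 's, 'a) eqn set
    \<Rightarrow> ('x \<times> 's) set \<Rightarrow> 'a" where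
  "theta f X \<Sigma> d = (SOME r. \<exists>x s a v. EqC x s a \<in> \<Sigma> \<and> d = rho X \<Sigma> `` {(x, s * v)} \<and> r = f a v)"

end

theory Submission
  imports Defs
begin

text \<open>A solution c of \<Sigma> in A is the same thing as the S-morphism F_S(X) \<rightarrow> A,
  (x, t) \<mapsto> (c x) t, identifying the pairs of H(\<Sigma>); together with the identity of A it also
  identifies the pairs of K(\<Sigma>). It therefore factors through C(\<Sigma>), agreeing with \<theta> on D(\<Sigma>),
  and through A(\<Sigma>), fixing A. Conversely, a morphism \<psi> out of either quotient gives back the
  solution x \<mapsto> \<psi>[x1], since [x1]t = [xt] and each equation of \<Sigma> holds in the quotient.\<close>

lemma is_act_free_act: "is_act (free_act X) free_action"
  unfolding is_act_def free_act_def free_action_def by (simp add: mult.assoc)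

lemma is_act_sum_carrier:
  assumes "is_act A f"
  shows "is_act (sum_carrier A X) (sum_action f)"
  using assms unfolding is_act_def sum_carrier_def free_act_def
  by (auto simp: free_action_def mult.assoc)

lemma act_closed: "is_act C f \<Longrightarrow> p \<in> C \<Longrightarrow> f p s \<in> C"
  unfolding is_act_def by blast

lemma act_one: "is_act C f \<Longrightarrow> p \<in> C \<Longrightarrow> f p 1 = p"
  unfolding is_act_def by blast

lemma act_mult: "is_act C f \<Longrightarrow> p \<in> C \<Longrightarrow> f p (s * t) = f (f p s) t"
  unfolding is_act_def by blast

lemma morph_closed: "is_morph C f D F h \<Longrightarrow> p \<in> C \<Longrightarrow> h p \<in> D"
  unfolding is_morph_def by blast

lemma morph_action: "is_morph C f D F h \<Longrightarrow> p \<in> C \<Longrightarrow> h (f p s) = F (h p) s"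
  unfolding is_morph_def by blast

lemma eqns_over_EqV: "eqns_over A X \<Sigma> \<Longrightarrow> EqV x s y t \<in> \<Sigma> \<Longrightarrow> x \<in> X \<and> y \<in> X"
  unfolding eqns_over_def by force

lemma eqns_over_EqC: "eqns_over A X \<Sigma> \<Longrightarrow> EqC x s a \<in> \<Sigma> \<Longrightarrow> x \<in> X \<and> a \<in> A"
  unfolding eqns_over_def by force

lemma cong_gen_in_carrier:
  assumes "(p, q) \<in> cong_gen C f R" "is_act C f"
  shows "p \<in> C \<and> q \<in> C"
  using assms(1) by (induction rule: cong_gen.induct) (use assms(2) act_closed in auto)

lemma equiv_cong_gen:
  assumes "is_act C f"
  shows "equiv C (cong_gen C f R)"
  unfolding equiv_def refl_on_def sym_def trans_def
  using cong_gen_in_carrier[OF _ assms] by (auto intro: cong_gen.intros)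

lemma cong_gen_class_eq:
  assumes "is_act C f" "(p, q) \<in> R" "p \<in> C" "q \<in> C"
  shows "cong_gen C f R `` {p} = cong_gen C f R `` {q}"
  using assms(2-4) by (intro equiv_class_eq[OF equiv_cong_gen[OF assms(1)]] cong_gen.base)

lemma cong_gen_some_rel:
  assumes "is_act C f" "p \<in> C"
  shows "(p, SOME q. q \<in> cong_gen C f R `` {p}) \<in> cong_gen C f R"
proof -
  have "p \<in> cong_gen C f R `` {p}"
    using equiv_cong_gen[OF assms(1)] assms(2) by (auto simp: equiv_def refl_on_def)
  then show ?thesis by (metis Image_singleton_iff someI)
qed

lemma cong_gen_respects:
  assumes "(p, q) \<in> cong_gen C f R" "is_act C f"
    and "\<And>p q. (p, q) \<in> R \<Longrightarrow> p \<in> C \<Longrightarrow> q \<in> C \<Longrightarrow> h p = h q"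
    and "is_morph C f D F h"
  shows "h p = h q"
  using assms(1)
proof (induction rule: cong_gen.induct)
  case (compat p q s)
  then have "p \<in> C" "q \<in> C" using cong_gen_in_carrier[OF _ assms(2)] by auto
  with compat.IH show ?case by (simp add: morph_action[OF assms(4)])
qed (use assms(3) in auto)

lemma quot_action_cong_gen_class:
  assumes "is_act C f" "p \<in> C"
  shows "quot_action (cong_gen C f R) f (cong_gen C f R `` {p}) s = cong_gen C f R `` {f p s}"
proof -
  let ?r = "cong_gen C f R"
  have "(f p s, f (SOME q. q \<in> ?r `` {p}) s) \<in> ?r"
    using cong_gen_some_rel[OF assms] by (rule cong_gen.compat)
  then show ?thesis
    unfolding quot_action_def by (simp add: equiv_class_eq[OF equiv_cong_gen[OF assms(1)]])
qed

definition quot_lift :: "('c \<Rightarrow> 'd) \<Rightarrow> 'c set \<Rightarrow> 'd" where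
  "quot_lift h Q = h (SOME p. p \<in> Q)"

lemma quot_lift_class:
  assumes "is_act C f" "p \<in> C"
    and "\<And>p q. (p, q) \<in> R \<Longrightarrow> p \<in> C \<Longrightarrow> q \<in> C \<Longrightarrow> h p = h q"
    and "is_morph C f D F h"
  shows "quot_lift h (cong_gen C f R `` {p}) = h p"
  unfolding quot_lift_def
  using cong_gen_respects[OF cong_gen_some_rel[OF assms(1,2)] assms(1,3,4)] by simp

lemma is_morph_quot_lift:
  assumes "is_act C f"
    and "\<And>p q. (p, q) \<in> R \<Longrightarrow> p \<in> C \<Longrightarrow> q \<in> C \<Longrightarrow> h p = h q"
    and "is_morph C f D F h"
  shows "is_morph (C // cong_gen C f R) (quot_action (cong_gen C f R) f) D F (quot_lift h)"
  unfolding is_morph_def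
proof (intro conjI ballI allI)
  fix Q s assume "Q \<in> C // cong_gen C f R"
  then obtain p where p: "p \<in> C" "Q = cong_gen C f R `` {p}" by (auto elim: quotientE)
  have lift: "quot_lift h (cong_gen C f R `` {p'}) = h p'" if "p' \<in> C" for p'
    using quot_lift_class[OF assms(1) that assms(2,3)] .
  show "quot_lift h Q \<in> D" using p lift morph_closed[OF assms(3)] by simp
  show "quot_lift h (quot_action (cong_gen C f R) f Q s) = F (quot_lift h Q) s"
    using p lift act_closed[OF assms(1) p(1)] morph_action[OF assms(3) p(1)]
    by (simp add: quot_action_cong_gen_class[OF assms(1) p(1)])
qed

lemma is_morph_quot_comp_class:
  assumes "is_act C f"
    and "is_morph (C // cong_gen C f R) (quot_action (cong_gen C f R) f) D F \<psi>"
  shows "is_morph C f D F (\<lambda>p. \<psi> (cong_gen C f R `` {p}))"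
  unfolding is_morph_def
proof (intro conjI ballI allI)
  fix p s assume "p \<in> C"
  then have cls: "cong_gen C f R `` {p} \<in> C // cong_gen C f R" by (rule quotientI)
  then show "\<psi> (cong_gen C f R `` {p}) \<in> D" by (rule morph_closed[OF assms(2)])
  show "\<psi> (cong_gen C f R `` {f p s}) = F (\<psi> (cong_gen C f R `` {p})) s"
    using morph_action[OF assms(2) cls] quot_action_cong_gen_class[OF assms(1) \<open>p \<in> C\<close>]
    by simp
qed

definition free_ext :: "('b \<Rightarrow> 's::monoid_mult \<Rightarrow> 'b) \<Rightarrow> ('x \<Rightarrow> 'b) \<Rightarrow> 'x \<times> 's \<Rightarrow> 'b" where
  "free_ext g b = (\<lambda>(x, t). g (b x) t)"

lemma is_morph_free_ext:
  assumes "is_act B g" "\<forall>x\<in>X. b x \<in> B"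
  shows "is_morph (free_act X) free_action B g (free_ext g b)"
  using assms unfolding is_morph_def is_act_def free_act_def free_ext_def free_action_def
  by auto

lemma free_ext_H_rel:
  assumes "is_solution B g e X \<Sigma> b" "(p, q) \<in> H_rel \<Sigma>"
  shows "free_ext g b p = free_ext g b q"
  using assms unfolding is_solution_def H_rel_def free_ext_def by auto

lemma free_ext_rho:
  assumes "is_act B g" "is_solution B g e X \<Sigma> b" "(p, q) \<in> rho X \<Sigma>"
  shows "free_ext g b p = free_ext g b q"
  using assms(3) unfolding rho_def
  by (rule cong_gen_respects[OF _ is_act_free_act free_ext_H_rel[OF assms(2)] is_morph_free_ext])
    (use assms(1,2) in \<open>auto simp: is_solution_def\<close>)

lemma free_ext_EqC:
  assumes "eqns_over A X \<Sigma>" "is_act B g" "is_morph A f B g e" "is_solution B g e X \<Sigma> b"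
    and "EqC x s a \<in> \<Sigma>"
  shows "free_ext g b (x, s * v) = e (f a v)"
proof -
  have "x \<in> X" "a \<in> A" using eqns_over_EqC[OF assms(1,5)] by auto
  with assms(2-5) show ?thesis
    unfolding is_solution_def free_ext_def by (simp add: act_mult morph_action)
qed

text \<open>Here consistency is used: \<theta> is defined through an arbitrary presentation
  [xs]v of its argument, and two presentations give the same value because both can be
  evaluated at a solution b in an act into which A embeds injectively.\<close>
lemma theta_class:
  assumes actA: "is_act A f" and over: "eqns_over A X \<Sigma>"
    and actB: "is_act B g" and emb: "is_morph A f B g e" and emb_inj: "inj_on e A"
    and sol: "is_solution B g e X \<Sigma> b"
    and eq: "EqC x s a \<in> \<Sigma>"
  shows "theta f X \<Sigma> (rho X \<Sigma> `` {(x, s * v)}) = f a v"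
proof -
  have "f a' v' = f a v"
    if eq': "EqC x' s' a' \<in> \<Sigma>" and same: "rho X \<Sigma> `` {(x, s * v)} = rho X \<Sigma> `` {(x', s' * v')}"
    for x' s' a' v'
  proof -
    have "x' \<in> X" "a \<in> A" "a' \<in> A" using eqns_over_EqC[OF over] eq eq' by auto
    then have "((x, s * v), (x', s' * v')) \<in> rho X \<Sigma>"
      using same eq_equiv_class equiv_cong_gen[OF is_act_free_act]
      unfolding rho_def free_act_def by fastforce
    then have "e (f a v) = e (f a' v')"
      using free_ext_rho[OF actB sol] free_ext_EqC[OF over actB emb sol] eq eq' by metis
    then show ?thesis
      using emb_inj act_closed[OF actA] \<open>a \<in> A\<close> \<open>a' \<in> A\<close> by (metis inj_on_def)
  qed
  then show ?thesis
    unfolding theta_def using eq by (blast intro: someI2)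
qed

definition kappa_gens :: "('x, 's, 'a) eqn set \<Rightarrow> (('a + ('x \<times> 's)) \<times> ('a + ('x \<times> 's))) set" where
  "kappa_gens \<Sigma> = (\<lambda>(p, q). (Inr p, Inr q)) ` H_rel \<Sigma> \<union> K_rel \<Sigma>"

lemma kappa_eq: "kappa A f X \<Sigma> = cong_gen (sum_carrier A X) (sum_action f) (kappa_gens \<Sigma>)"
  unfolding kappa_def kappa_gens_def ..

lemma kappa_gensE:
  assumes "(p, q) \<in> kappa_gens \<Sigma>"
  obtains x u y v where "p = Inr (x, u)" "q = Inr (y, v)" "EqV x u y v \<in> \<Sigma>"
    | x s a where "p = Inr (x, s)" "q = Inl a" "EqC x s a \<in> \<Sigma>"
  using assms unfolding kappa_gens_def H_rel_def K_rel_def by auto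

lemma kappa_gens_EqV: "EqV x u y v \<in> \<Sigma> \<Longrightarrow> (Inr (x, u), Inr (y, v)) \<in> kappa_gens \<Sigma>"
  unfolding kappa_gens_def H_rel_def by force

lemma kappa_gens_EqC: "EqC x s a \<in> \<Sigma> \<Longrightarrow> (Inr (x, s), Inl a) \<in> kappa_gens \<Sigma>"
  unfolding kappa_gens_def K_rel_def by blast

lemma Inl_in_sum_carrier: "a \<in> A \<Longrightarrow> Inl a \<in> sum_carrier A X"
  unfolding sum_carrier_def by blast

lemma Inr_in_sum_carrier: "x \<in> X \<Longrightarrow> Inr (x, t) \<in> sum_carrier A X"
  unfolding sum_carrier_def free_act_def by blast

lemma retraction_of_solution:
  assumes actA: "is_act A f" and sol: "is_solution A f id X \<Sigma> c"
  shows "is_morph (A_Sig A f X \<Sigma>) (A_Sig_action A f X \<Sigma>) A f (quot_lift (case_sum id (free_ext f c)))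
    \<and> (\<forall>a\<in>A. quot_lift (case_sum id (free_ext f c)) (nu A f X \<Sigma> a) = a)"
proof -
  let ?h = "case_sum id (free_ext f c)"
  have actS: "is_act (sum_carrier A X) (sum_action f)" by (rule is_act_sum_carrier[OF actA])
  have morph: "is_morph (sum_carrier A X) (sum_action f) A f ?h"
    using is_morph_free_ext[OF actA, of X c] sol actA
    unfolding is_morph_def is_solution_def sum_carrier_def free_act_def is_act_def
    by (auto simp: free_action_def)
  have respects: "?h p = ?h q" if "(p, q) \<in> kappa_gens \<Sigma>" for p q
    using that sol by (cases rule: kappa_gensE) (auto simp: is_solution_def free_ext_def)
  have "quot_lift ?h (nu A f X \<Sigma> a) = a" if "a \<in> A" for a
    using quot_lift_class[OF actS Inl_in_sum_carrier[OF that] respects morph]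
    unfolding nu_def kappa_eq by simp
  then show ?thesis
    using is_morph_quot_lift[OF actS respects morph]
    unfolding A_Sig_def A_Sig_action_def kappa_eq by simp
qed

lemma solution_of_retraction:
  assumes actA: "is_act A f" and over: "eqns_over A X \<Sigma>"
    and mor: "is_morph (A_Sig A f X \<Sigma>) (A_Sig_action A f X \<Sigma>) A f \<phi>"
    and ret: "\<forall>a\<in>A. \<phi> (nu A f X \<Sigma> a) = a"
  shows "is_solution A f id X \<Sigma> (\<lambda>x. \<phi> (kappa A f X \<Sigma> `` {Inr (x, 1)}))"
proof -
  let ?k = "kappa A f X \<Sigma>"
  have actS: "is_act (sum_carrier A X) (sum_action f)" by (rule is_act_sum_carrier[OF actA])
  have morph: "is_morph (sum_carrier A X) (sum_action f) A f (\<lambda>p. \<phi> (?k `` {p}))"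
    using is_morph_quot_comp_class[OF actS] mor
    unfolding A_Sig_def A_Sig_action_def kappa_eq .
  have shift: "f (\<phi> (?k `` {Inr (x, 1)})) t = \<phi> (?k `` {Inr (x, t)})" if "x \<in> X" for x t
    using morph_action[OF morph Inr_in_sum_carrier[OF that, of 1], of t, symmetric]
    by (simp only: sum_action.simps free_action_def fst_conv snd_conv mult_1)
  show ?thesis
    unfolding is_solution_def
  proof (intro conjI allI impI ballI)
    fix x assume "x \<in> X"
    then show "\<phi> (?k `` {Inr (x, 1)}) \<in> A" by (intro morph_closed[OF morph] Inr_in_sum_carrier)
  next
    fix x s y t assume eq: "EqV x s y t \<in> \<Sigma>"
    then have "x \<in> X" "y \<in> X" using eqns_over_EqV[OF over] by auto
    then have "?k `` {Inr (x, s)} = ?k `` {Inr (y, t)}"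
      unfolding kappa_eq by (intro cong_gen_class_eq actS kappa_gens_EqV eq Inr_in_sum_carrier)
    with \<open>x \<in> X\<close> \<open>y \<in> X\<close> show "f (\<phi> (?k `` {Inr (x, 1)})) s = f (\<phi> (?k `` {Inr (y, 1)})) t"
      by (simp add: shift)
  next
    fix x s a assume eq: "EqC x s a \<in> \<Sigma>"
    then have "x \<in> X" "a \<in> A" using eqns_over_EqC[OF over] by auto
    then have "?k `` {Inr (x, s)} = nu A f X \<Sigma> a"
      unfolding nu_def kappa_eq
      by (intro cong_gen_class_eq actS kappa_gens_EqC eq Inr_in_sum_carrier Inl_in_sum_carrier)
    with shift[OF \<open>x \<in> X\<close>] ret \<open>a \<in> A\<close> show "f (\<phi> (?k `` {Inr (x, 1)})) s = id a"
      by simp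
  qed
qed

lemma extension_of_solution:
  assumes actA: "is_act A f" and over: "eqns_over A X \<Sigma>" and sol: "is_solution A f id X \<Sigma> c"
  shows "is_morph (C_Sig X \<Sigma>) (C_Sig_action X \<Sigma>) A f (quot_lift (free_ext f c))
    \<and> (\<forall>d\<in>D_Sig X \<Sigma>. quot_lift (free_ext f c) d = theta f X \<Sigma> d)"
proof -
  have morph: "is_morph (free_act X) free_action A f (free_ext f c)"
    using is_morph_free_ext[OF actA] sol unfolding is_solution_def by blast
  have respects: "\<And>p q. (p, q) \<in> H_rel \<Sigma> \<Longrightarrow> free_ext f c p = free_ext f c q"
    using free_ext_H_rel[OF sol] .
  have id_morph: "is_morph A f A f id"
    using act_closed[OF actA] unfolding is_morph_def by simp
  have "quot_lift (free_ext f c) d = theta f X \<Sigma> d" if d_in: "d \<in> D_Sig X \<Sigma>" for d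
  proof -
    obtain x s a v where eq: "EqC x s a \<in> \<Sigma>" and d: "d = rho X \<Sigma> `` {(x, s * v)}"
      using d_in unfolding D_Sig_def by blast
    have "(x, s * v) \<in> free_act X"
      using eqns_over_EqC[OF over eq] unfolding free_act_def by simp
    then have "quot_lift (free_ext f c) d = free_ext f c (x, s * v)"
      using d quot_lift_class[OF is_act_free_act _ respects morph] unfolding rho_def by simp
    also have "\<dots> = f a v"
      using free_ext_EqC[OF over actA id_morph sol eq] by simp
    also have "\<dots> = theta f X \<Sigma> d"
      using theta_class[OF actA over actA id_morph inj_on_id sol eq] d by simp
    finally show ?thesis .
  qed
  moreover have "is_morph (C_Sig X \<Sigma>) (C_Sig_action X \<Sigma>) A f (quot_lift (free_ext f c))"
    using is_morph_quot_lift[OF is_act_free_act respects morph]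
    unfolding C_Sig_def C_Sig_action_def rho_def .
  ultimately show ?thesis by blast
qed

lemma solution_of_extension:
  assumes actA: "is_act A f" and over: "eqns_over A X \<Sigma>"
    and actB: "is_act B g" and emb: "is_morph A f B g e" and emb_inj: "inj_on e A"
    and consistent: "is_solution B g e X \<Sigma> b"
    and mor: "is_morph (C_Sig X \<Sigma>) (C_Sig_action X \<Sigma>) A f \<psi>"
    and ext: "\<forall>d\<in>D_Sig X \<Sigma>. \<psi> d = theta f X \<Sigma> d"
  shows "is_solution A f id X \<Sigma> (\<lambda>x. \<psi> (rho X \<Sigma> `` {(x, 1)}))"
proof -
  let ?r = "rho X \<Sigma>"
  have rho: "?r = cong_gen (free_act X) free_action (H_rel \<Sigma>)" unfolding rho_def ..
  have morph: "is_morph (free_act X) free_action A f (\<lambda>p. \<psi> (?r `` {p}))"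
    using is_morph_quot_comp_class[OF is_act_free_act] mor
    unfolding C_Sig_def C_Sig_action_def rho .
  have gen: "(x, t) \<in> free_act X" if "x \<in> X" for x t
    using that unfolding free_act_def by simp
  have shift: "f (\<psi> (?r `` {(x, 1)})) t = \<psi> (?r `` {(x, t)})" if "x \<in> X" for x t
    using morph_action[OF morph gen[OF that, of 1], of t, symmetric]
    by (simp only: free_action_def fst_conv snd_conv mult_1)
  show ?thesis
    unfolding is_solution_def
  proof (intro conjI allI impI ballI)
    fix x assume "x \<in> X"
    then show "\<psi> (?r `` {(x, 1)}) \<in> A" by (intro morph_closed[OF morph] gen)
  next
    fix x s y t assume eq: "EqV x s y t \<in> \<Sigma>"
    then have "x \<in> X" "y \<in> X" using eqns_over_EqV[OF over] by auto
    moreover have "((x, s), (y, t)) \<in> H_rel \<Sigma>" using eq unfolding H_rel_def by blast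
    ultimately have "?r `` {(x, s)} = ?r `` {(y, t)}"
      unfolding rho by (intro cong_gen_class_eq is_act_free_act gen)
    with \<open>x \<in> X\<close> \<open>y \<in> X\<close> show "f (\<psi> (?r `` {(x, 1)})) s = f (\<psi> (?r `` {(y, 1)})) t"
      by (simp add: shift)
  next
    fix x s a assume eq: "EqC x s a \<in> \<Sigma>"
    then have "x \<in> X" "a \<in> A" using eqns_over_EqC[OF over] by auto
    have "?r `` {(x, s * 1)} \<in> D_Sig X \<Sigma>" unfolding D_Sig_def using eq by blast
    then have "\<psi> (?r `` {(x, s)}) = f a 1"
      using ext theta_class[OF actA over actB emb emb_inj consistent eq, of 1] by simp
    also have "\<dots> = a" using act_one[OF actA \<open>a \<in> A\<close>] .
    finally show "f (\<psi> (?r `` {(x, 1)})) s = id a" using shift[OF \<open>x \<in> X\<close>] by simp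
  qed
qed

theorem mainTheorem11:
  fixes A :: "'a set" and f :: "'a \<Rightarrow> 's::monoid_mult \<Rightarrow> 'a"
    and X :: "'x set" and \<Sigma> :: "('x, 's, 'a) eqn set"
    and B :: "'b set" and g :: "'b \<Rightarrow> 's \<Rightarrow> 'b" and e :: "'a \<Rightarrow> 'b" and b :: "'x \<Rightarrow> 'b"
  assumes actA: "is_act A f"
    and over: "eqns_over A X \<Sigma>"
    and actB: "is_act B g"
    and emb: "is_morph A f B g e" and emb_inj: "inj_on e A"
    and consistent: "is_solution B g e X \<Sigma> b"
  shows "((\<exists>c. is_solution A f id X \<Sigma> c)
          \<longleftrightarrow> (\<exists>\<phi>. is_morph (A_Sig A f X \<Sigma>) (A_Sig_action A f X \<Sigma>) A f \<phi>
                   \<and> (\<forall>a\<in>A. \<phi> (nu A f X \<Sigma> a) = a)))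
       \<and> ((\<exists>c. is_solution A f id X \<Sigma> c)
          \<longleftrightarrow> (\<exists>\<psi>. is_morph (C_Sig X \<Sigma>) (C_Sig_action X \<Sigma>) A f \<psi>
                   \<and> (\<forall>d\<in>D_Sig X \<Sigma>. \<psi> d = theta f X \<Sigma> d)))"
  apply (intro conjI iffI)
  subgoal using retraction_of_solution[OF actA] by blast
  subgoal using solution_of_retraction[OF actA over] by blast
  subgoal using extension_of_solution[OF actA over] by blast
  subgoal using solution_of_extension[OF actA over actB emb emb_inj consistent] by blast
  done

end
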